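(* Let $\mathcal{C},\mathcal{D}$ be fibration categories and $F\colon\mathcal{C}\rightleftarrows\mathcal{D}\colon G$ an adjoint pair ($F\dashv G$) of exact functors. If two morphisms $f,g\colon A\to GB$ are homotopic in $\mathcal{C}$, then their adjoint transposes $\overline{f},\overline{g}\colon FA\to B$ are homotopic in $\mathcal{D}$.
   Context: A fibration category is a category with wide subcategories of fibrations and weak equivalences such that: weak equivalences satisfy 2-out-of-6; isomorphisms are acyclic fibrations; pullbacks along fibrations exist and fibrations and acyclic fibrations are stable under pullback; there is a terminal object and all objects are fibrant; every map factors as a weak equivalence followed by a fibration. An exact functor preserves fibrations, acyclic fibrations, pullbacks along fibrations and the terminal object. Two morphisms are homotopic if they become equal in the homotopy category $\mathrm{Ho}\,\mathcal{C}$ (the localization at the weak equivalences). *)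

theory Defs
  imports Main
begin

text \<open>A (small) category presented by its set of objects, its set of arrows,
  domain, codomain, identities and composition (cComp C g f = g o f),
  together with distinguished sets of fibrations and weak equivalences.\<close>

record ('o, 'a) fcat =
  cObj  :: "'o set"
  cArr  :: "'a set"
  cDom  :: "'a \<Rightarrow> 'o"
  cCod  :: "'a \<Rightarrow> 'o"
  cId   :: "'o \<Rightarrow> 'a"
  cComp :: "'a \<Rightarrow> 'a \<Rightarrow> 'a"
  cFib  :: "'a set"
  cWe   :: "'a set"

definition hom :: "('o, 'a) fcat \<Rightarrow> 'o \<Rightarrow> 'o \<Rightarrow> 'a set" where
  "hom C X Y = {f \<in> cArr C. cDom C f = X \<and> cCod C f = Y}"

definition category :: "('o, 'a) fcat \<Rightarrow> bool" where
  "category C \<longleftrightarrow>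
     (\<forall>f\<in>cArr C. cDom C f \<in> cObj C \<and> cCod C f \<in> cObj C) \<and>
     (\<forall>X\<in>cObj C. cId C X \<in> hom C X X) \<and>
     (\<forall>f\<in>cArr C. \<forall>g\<in>cArr C. cCod C f = cDom C g \<longrightarrow>
         cComp C g f \<in> hom C (cDom C f) (cCod C g)) \<and>
     (\<forall>f\<in>cArr C. cComp C f (cId C (cDom C f)) = f \<and> cComp C (cId C (cCod C f)) f = f) \<and>
     (\<forall>f\<in>cArr C. \<forall>g\<in>cArr C. \<forall>h\<in>cArr C.
         cCod C f = cDom C g \<longrightarrow> cCod C g = cDom C h \<longrightarrow>
         cComp C h (cComp C g f) = cComp C (cComp C h g) f)"

definition iso :: "('o, 'a) fcat \<Rightarrow> 'a \<Rightarrow> bool" where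
  "iso C f \<longleftrightarrow> f \<in> cArr C \<and>
     (\<exists>g\<in>hom C (cCod C f) (cDom C f).
        cComp C g f = cId C (cDom C f) \<and> cComp C f g = cId C (cCod C f))"

definition terminal :: "('o, 'a) fcat \<Rightarrow> 'o \<Rightarrow> bool" where
  "terminal C T \<longleftrightarrow> T \<in> cObj C \<and> (\<forall>X\<in>cObj C. \<exists>!t. t \<in> hom C X T)"

text \<open>Pullback square
\<open>P --f'--> E\<close>, \<open>p' : P \<rightarrow> A\<close>, \<open>p : E \<rightarrow> B\<close>, \<open>f : A \<rightarrow> B\<close>, with \<open>p o f' = f o p'\<close>;
  \<open>p'\<close> is the pullback of \<open>p\<close> along \<open>f\<close>.\<close>

definition is_pullback :: "('o, 'a) fcat \<Rightarrow> 'a \<Rightarrow> 'a \<Rightarrow> 'a \<Rightarrow> 'a \<Rightarrow> bool" where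
  "is_pullback C p f p' f' \<longleftrightarrow>
     p \<in> cArr C \<and> f \<in> cArr C \<and> p' \<in> cArr C \<and> f' \<in> cArr C \<and>
     cCod C f = cCod C p \<and> cDom C p' = cDom C f' \<and>
     cCod C p' = cDom C f \<and> cCod C f' = cDom C p \<and>
     cComp C p f' = cComp C f p' \<and>
     (\<forall>Q a e. a \<in> hom C Q (cDom C f) \<and> e \<in> hom C Q (cDom C p) \<and>
        cComp C f a = cComp C p e \<longrightarrow>
        (\<exists>!u. u \<in> hom C Q (cDom C p') \<and> cComp C p' u = a \<and> cComp C f' u = e))"

definition fibration_category :: "('o, 'a) fcat \<Rightarrow> bool" where
  "fibration_category C \<longleftrightarrow>
     category C \<and>
     \<comment> \<open>fibrations and weak equivalences form wide subcategories\<close>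
     cFib C \<subseteq> cArr C \<and> cWe C \<subseteq> cArr C \<and>
     (\<forall>X\<in>cObj C. cId C X \<in> cFib C \<and> cId C X \<in> cWe C) \<and>
     (\<forall>f\<in>cFib C. \<forall>g\<in>cFib C. cCod C f = cDom C g \<longrightarrow> cComp C g f \<in> cFib C) \<and>
     (\<forall>f\<in>cWe C. \<forall>g\<in>cWe C. cCod C f = cDom C g \<longrightarrow> cComp C g f \<in> cWe C) \<and>
     \<comment> \<open>2-out-of-6\<close>
     (\<forall>f\<in>cArr C. \<forall>g\<in>cArr C. \<forall>h\<in>cArr C.
        cCod C f = cDom C g \<and> cCod C g = cDom C h \<and>
        cComp C g f \<in> cWe C \<and> cComp C h g \<in> cWe C \<longrightarrow>
        f \<in> cWe C \<and> g \<in> cWe C \<and> h \<in> cWe C \<and> cComp C h (cComp C g f) \<in> cWe C) \<and>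
     \<comment> \<open>isomorphisms are acyclic fibrations\<close>
     (\<forall>f. iso C f \<longrightarrow> f \<in> cFib C \<and> f \<in> cWe C) \<and>
     \<comment> \<open>pullbacks along fibrations exist\<close>
     (\<forall>p\<in>cFib C. \<forall>f\<in>cArr C. cCod C f = cCod C p \<longrightarrow> (\<exists>p' f'. is_pullback C p f p' f')) \<and>
     \<comment> \<open>fibrations and acyclic fibrations are stable under pullback\<close>
     (\<forall>p f p' f'. is_pullback C p f p' f' \<and> p \<in> cFib C \<longrightarrow>
        p' \<in> cFib C \<and> (p \<in> cWe C \<longrightarrow> p' \<in> cWe C)) \<and>
     \<comment> \<open>terminal object, all objects fibrant\<close>
     (\<exists>T. terminal C T \<and> (\<forall>X\<in>cObj C. \<forall>t\<in>hom C X T. t \<in> cFib C)) \<and>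
     \<comment> \<open>factorization: weak equivalence followed by fibration\<close>
     (\<forall>f\<in>cArr C. \<exists>w p. w \<in> cWe C \<and> p \<in> cFib C \<and> cCod C w = cDom C p \<and> cComp C p w = f)"

definition is_functor :: "('o, 'a) fcat \<Rightarrow> ('p, 'b) fcat \<Rightarrow> ('o \<Rightarrow> 'p) \<Rightarrow> ('a \<Rightarrow> 'b) \<Rightarrow> bool" where
  "is_functor C D FO FA \<longleftrightarrow>
     (\<forall>X\<in>cObj C. FO X \<in> cObj D) \<and>
     (\<forall>f\<in>cArr C. FA f \<in> hom D (FO (cDom C f)) (FO (cCod C f))) \<and>
     (\<forall>X\<in>cObj C. FA (cId C X) = cId D (FO X)) \<and>
     (\<forall>f\<in>cArr C. \<forall>g\<in>cArr C. cCod C f = cDom C g \<longrightarrow>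
        FA (cComp C g f) = cComp D (FA g) (FA f))"

definition exact_functor :: "('o, 'a) fcat \<Rightarrow> ('p, 'b) fcat \<Rightarrow> ('o \<Rightarrow> 'p) \<Rightarrow> ('a \<Rightarrow> 'b) \<Rightarrow> bool" where
  "exact_functor C D FO FA \<longleftrightarrow>
     is_functor C D FO FA \<and>
     (\<forall>p\<in>cFib C. FA p \<in> cFib D) \<and>
     (\<forall>p\<in>cFib C \<inter> cWe C. FA p \<in> cFib D \<inter> cWe D) \<and>
     (\<forall>p f p' f'. is_pullback C p f p' f' \<and> p \<in> cFib C \<longrightarrow>
        is_pullback D (FA p) (FA f) (FA p') (FA f')) \<and>
     (\<forall>T. terminal C T \<longrightarrow> terminal D (FO T))"

definition adjunction ::
  "('o, 'a) fcat \<Rightarrow> ('p, 'b) fcat \<Rightarrow> ('o \<Rightarrow> 'p) \<Rightarrow> ('a \<Rightarrow> 'b) \<Rightarrow> ('p \<Rightarrow> 'o) \<Rightarrow> ('b \<Rightarrow> 'a)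
     \<Rightarrow> ('o \<Rightarrow> 'p \<Rightarrow> 'b \<Rightarrow> 'a) \<Rightarrow> bool" where
  "adjunction C D FO FA GO GA phi \<longleftrightarrow>
     is_functor C D FO FA \<and> is_functor D C GO GA \<and>
     (\<forall>A\<in>cObj C. \<forall>B\<in>cObj D. bij_betw (phi A B) (hom D (FO A) B) (hom C A (GO B))) \<and>
     (\<forall>A A' B B' h k g. h \<in> hom C A' A \<and> k \<in> hom D B B' \<and> g \<in> hom D (FO A) B \<longrightarrow>
        phi A' B' (cComp D k (cComp D g (FA h))) = cComp C (GA k) (cComp C (phi A B g) h))"

text \<open>Morphisms of the localization are zigzags modulo the congruence generated by
  composition, identities and the invertibility of weak equivalences.
  A step \<open>Inl f\<close> is a forward arrow f, a step \<open>Inr w\<close> the formal inverse of w.\<close>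

fun step_src :: "('o, 'a) fcat \<Rightarrow> 'a + 'a \<Rightarrow> 'o" where
  "step_src C (Inl f) = cDom C f"
| "step_src C (Inr w) = cCod C w"

fun step_tgt :: "('o, 'a) fcat \<Rightarrow> 'a + 'a \<Rightarrow> 'o" where
  "step_tgt C (Inl f) = cCod C f"
| "step_tgt C (Inr w) = cDom C w"

fun step_ok :: "('o, 'a) fcat \<Rightarrow> 'a + 'a \<Rightarrow> bool" where
  "step_ok C (Inl f) = (f \<in> cArr C)"
| "step_ok C (Inr w) = (w \<in> cWe C)"

fun zz_path :: "('o, 'a) fcat \<Rightarrow> 'o \<Rightarrow> 'o \<Rightarrow> ('a + 'a) list \<Rightarrow> bool" where
  "zz_path C X Y [] = (X = Y \<and> X \<in> cObj C)"
| "zz_path C X Y (s # xs) = (step_ok C s \<and> step_src C s = X \<and> zz_path C (step_tgt C s) Y xs)"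

inductive zz_rel :: "('o, 'a) fcat \<Rightarrow> 'o \<Rightarrow> 'o \<Rightarrow> ('a + 'a) list \<Rightarrow> ('a + 'a) list \<Rightarrow> bool"
  for C where
  zz_comp: "\<lbrakk>f \<in> cArr C; g \<in> cArr C; cCod C f = cDom C g\<rbrakk> \<Longrightarrow>
     zz_rel C (cDom C f) (cCod C g) [Inl f, Inl g] [Inl (cComp C g f)]"
| zz_ident: "X \<in> cObj C \<Longrightarrow> zz_rel C X X [Inl (cId C X)] []"
| zz_linv: "w \<in> cWe C \<Longrightarrow> zz_rel C (cDom C w) (cDom C w) [Inl w, Inr w] []"
| zz_rinv: "w \<in> cWe C \<Longrightarrow> zz_rel C (cCod C w) (cCod C w) [Inr w, Inl w] []"
| zz_ctx: "\<lbrakk>zz_rel C X Y p q; zz_path C U X r; zz_path C Y V s\<rbrakk> \<Longrightarrow>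
     zz_rel C U V (r @ p @ s) (r @ q @ s)"
| zz_refl: "zz_path C X Y p \<Longrightarrow> zz_rel C X Y p p"
| zz_sym: "zz_rel C X Y p q \<Longrightarrow> zz_rel C X Y q p"
| zz_trans: "\<lbrakk>zz_rel C X Y p q; zz_rel C X Y q r\<rbrakk> \<Longrightarrow> zz_rel C X Y p r"

text \<open>Two parallel morphisms are homotopic iff they become equal in \<open>Ho C\<close>.\<close>

definition homotopic :: "('o, 'a) fcat \<Rightarrow> 'a \<Rightarrow> 'a \<Rightarrow> bool" where
  "homotopic C f g \<longleftrightarrow> f \<in> cArr C \<and> g \<in> cArr C \<and>
     cDom C f = cDom C g \<and> cCod C f = cCod C g \<and>
     zz_rel C (cDom C f) (cCod C f) [Inl f] [Inl g]"

end

theory Submission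
  imports Defs
begin

(* Writing eps : F G B -> B for the counit, the transpose of h : A -> G B is eps o F h. So it
   suffices that F sends homotopic maps to homotopic maps, i.e. that F sends weak equivalences
   to weak equivalences, for then it maps the zigzags presenting Ho C to zigzags in D.
   An exact functor preserves acyclic fibrations, and by Brown's factorization lemma (factor
   (id, w) : X -> X x Y as a weak equivalence j followed by a fibration and project) every weak
   equivalence w is q2 o j where q1 o j = id for acyclic fibrations q1, q2. Applying 2-out-of-3
   to F q1 o F j = id shows that F j, hence F w, is a weak equivalence. *)

lemma category_comp_hom:
  assumes "category C" "f \<in> hom C X Y" "g \<in> hom C Y Z"
  shows "cComp C g f \<in> hom C X Z"
  using assms unfolding category_def hom_def by auto

lemma category_id_hom:
  assumes "category C" "X \<in> cObj C"
  shows "cId C X \<in> hom C X X"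
  using assms unfolding category_def by blast

lemma category_id_left:
  assumes "category C" "f \<in> hom C X Y"
  shows "cComp C (cId C Y) f = f"
  using assms unfolding category_def hom_def by auto

lemma category_id_right:
  assumes "category C" "f \<in> hom C X Y"
  shows "cComp C f (cId C X) = f"
  using assms unfolding category_def hom_def by auto

lemma category_assoc:
  assumes "category C" "f \<in> hom C X Y" "g \<in> hom C Y Z" "h \<in> hom C Z W"
  shows "cComp C h (cComp C g f) = cComp C (cComp C h g) f"
  using assms unfolding category_def hom_def by auto

lemma hom_dom_obj:
  assumes "category C" "f \<in> hom C X Y"
  shows "X \<in> cObj C"
  using assms unfolding category_def hom_def by auto

lemma hom_cod_obj:
  assumes "category C" "f \<in> hom C X Y"
  shows "Y \<in> cObj C"
  using assms unfolding category_def hom_def by auto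

lemma functor_hom:
  assumes "is_functor C D FO FA" "f \<in> hom C X Y"
  shows "FA f \<in> hom D (FO X) (FO Y)"
  using assms unfolding is_functor_def hom_def by auto

lemma functor_id:
  assumes "is_functor C D FO FA" "X \<in> cObj C"
  shows "FA (cId C X) = cId D (FO X)"
  using assms unfolding is_functor_def by blast

lemma functor_comp:
  assumes "is_functor C D FO FA" "f \<in> hom C X Y" "g \<in> hom C Y Z"
  shows "FA (cComp C g f) = cComp D (FA g) (FA f)"
  using assms unfolding is_functor_def hom_def by auto

lemma functor_obj:
  assumes "is_functor C D FO FA" "X \<in> cObj C"
  shows "FO X \<in> cObj D"
  using assms unfolding is_functor_def by blast

lemma is_pullback_sym:
  assumes "is_pullback C p f p' f'"
  shows "is_pullback C f p f' p'"
  using assms unfolding is_pullback_def by metis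

lemma fibration_categoryD:
  assumes "fibration_category C"
  shows "category C" "cFib C \<subseteq> cArr C" "cWe C \<subseteq> cArr C"
    "\<forall>X\<in>cObj C. cId C X \<in> cFib C \<and> cId C X \<in> cWe C"
    "\<forall>f\<in>cFib C. \<forall>g\<in>cFib C. cCod C f = cDom C g \<longrightarrow> cComp C g f \<in> cFib C"
    "\<forall>f\<in>cWe C. \<forall>g\<in>cWe C. cCod C f = cDom C g \<longrightarrow> cComp C g f \<in> cWe C"
    "\<forall>f\<in>cArr C. \<forall>g\<in>cArr C. \<forall>h\<in>cArr C.
        cCod C f = cDom C g \<and> cCod C g = cDom C h \<and>
        cComp C g f \<in> cWe C \<and> cComp C h g \<in> cWe C \<longrightarrow>
        f \<in> cWe C \<and> g \<in> cWe C \<and> h \<in> cWe C \<and> cComp C h (cComp C g f) \<in> cWe C"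
    "\<forall>p\<in>cFib C. \<forall>f\<in>cArr C.
        cCod C f = cCod C p \<longrightarrow> (\<exists>p' f'. is_pullback C p f p' f')"
    "\<forall>p f p' f'. is_pullback C p f p' f' \<and> p \<in> cFib C \<longrightarrow>
        p' \<in> cFib C \<and> (p \<in> cWe C \<longrightarrow> p' \<in> cWe C)"
    "\<exists>T. terminal C T \<and> (\<forall>X\<in>cObj C. \<forall>t\<in>hom C X T. t \<in> cFib C)"
    "\<forall>f\<in>cArr C. \<exists>w p.
        w \<in> cWe C \<and> p \<in> cFib C \<and> cCod C w = cDom C p \<and> cComp C p w = f"
  by (insert assms[unfolded fibration_category_def], (elim conjE, assumption)+)

lemma fibration_category_category:
  assumes "fibration_category C"
  shows "category C"
  using fibration_categoryD(1)[OF assms] .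

lemma fib_arr:
  assumes "fibration_category C" "p \<in> cFib C"
  shows "p \<in> cArr C"
  using fibration_categoryD(2)[OF assms(1)] assms(2) by blast

lemma we_arr:
  assumes "fibration_category C" "w \<in> cWe C"
  shows "w \<in> cArr C"
  using fibration_categoryD(3)[OF assms(1)] assms(2) by blast

lemma id_we:
  assumes "fibration_category C" "X \<in> cObj C"
  shows "cId C X \<in> cWe C"
  using fibration_categoryD(4)[OF assms(1)] assms(2) by blast

lemma fib_comp:
  assumes "fibration_category C" "f \<in> cFib C" "g \<in> cFib C" "cCod C f = cDom C g"
  shows "cComp C g f \<in> cFib C"
  using fibration_categoryD(5)[OF assms(1)] assms(2-) by blast

lemma we_comp:
  assumes "fibration_category C" "f \<in> cWe C" "g \<in> cWe C" "cCod C f = cDom C g"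
  shows "cComp C g f \<in> cWe C"
  using fibration_categoryD(6)[OF assms(1)] assms(2-) by blast

lemma we_2_out_of_6:
  assumes "fibration_category C" "f \<in> hom C X Y" "g \<in> hom C Y Z" "h \<in> hom C Z W"
    and "cComp C g f \<in> cWe C" "cComp C h g \<in> cWe C"
  shows "f \<in> cWe C \<and> g \<in> cWe C \<and> h \<in> cWe C"
  using fibration_categoryD(7)[OF assms(1), rule_format, of f g h] assms(2-) unfolding hom_def by auto

lemma we_2_out_of_3_left:
  assumes C: "fibration_category C" and f: "f \<in> hom C X Y" and g: "g \<in> hom C Y Z"
    and "cComp C g f \<in> cWe C" "f \<in> cWe C"
  shows "g \<in> cWe C"
proof -
  have cat: "category C" by (rule fibration_category_category[OF C])
  have "X \<in> cObj C" by (rule hom_dom_obj[OF cat f])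
  then show ?thesis
    using we_2_out_of_6[OF C category_id_hom[OF cat] f g] category_id_right[OF cat f] assms
    by simp
qed

lemma we_2_out_of_3_right:
  assumes C: "fibration_category C" and f: "f \<in> hom C X Y" and g: "g \<in> hom C Y Z"
    and "cComp C g f \<in> cWe C" "g \<in> cWe C"
  shows "f \<in> cWe C"
proof -
  have cat: "category C" by (rule fibration_category_category[OF C])
  have "Z \<in> cObj C" by (rule hom_cod_obj[OF cat g])
  then show ?thesis
    using we_2_out_of_6[OF C f g category_id_hom[OF cat]] category_id_left[OF cat g] assms
    by simp
qed

lemma fibration_category_factorization:
  assumes C: "fibration_category C" and f: "f \<in> hom C X Y"
  obtains Z j q where "j \<in> hom C X Z" "q \<in> hom C Z Y" "j \<in> cWe C" "q \<in> cFib C"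
    "cComp C q j = f"
proof -
  obtain j q where jq: "j \<in> cWe C" "q \<in> cFib C" "cCod C j = cDom C q" "cComp C q j = f"
    using fibration_categoryD(11)[OF C] f unfolding hom_def by blast
  have "j \<in> hom C (cDom C j) (cCod C j)" "q \<in> hom C (cCod C j) (cCod C q)"
    using jq we_arr[OF C] fib_arr[OF C] unfolding hom_def by auto
  moreover from this have "f \<in> hom C (cDom C j) (cCod C q)"
    using category_comp_hom[OF fibration_category_category[OF C]] jq(4) by metis
  ultimately show thesis
    using that jq f unfolding hom_def by auto
qed

lemma pullback_legs_hom:
  assumes "is_pullback C p f p' f'"
  shows "p' \<in> hom C (cDom C p') (cDom C f)" "f' \<in> hom C (cDom C p') (cDom C p)"
  using assms unfolding is_pullback_def hom_def by auto

lemma pullback_lift: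
  assumes "is_pullback C p f p' f'"
    and "a \<in> hom C Q (cDom C f)" "e \<in> hom C Q (cDom C p)" "cComp C f a = cComp C p e"
  obtains u where "u \<in> hom C Q (cDom C p')" "cComp C p' u = a" "cComp C f' u = e"
proof -
  have "\<forall>Q a e. a \<in> hom C Q (cDom C f) \<and> e \<in> hom C Q (cDom C p) \<and>
      cComp C f a = cComp C p e \<longrightarrow>
      (\<exists>!u. u \<in> hom C Q (cDom C p') \<and> cComp C p' u = a \<and> cComp C f' u = e)"
    using assms(1) unfolding is_pullback_def by (elim conjE)
  then show thesis using that assms(2-) by blast
qed

lemma product_with_fibration_projections:
  assumes C: "fibration_category C" and "X \<in> cObj C" "Y \<in> cObj C"
  obtains P p1 p2 where "p1 \<in> hom C P X" "p2 \<in> hom C P Y" "p1 \<in> cFib C" "p2 \<in> cFib C"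
    "\<And>Q a b. a \<in> hom C Q X \<Longrightarrow> b \<in> hom C Q Y \<Longrightarrow>
       \<exists>u\<in>hom C Q P. cComp C p1 u = a \<and> cComp C p2 u = b"
proof -
  have cat: "category C" by (rule fibration_category_category[OF C])
  obtain T where T: "terminal C T"
    and fibrant: "\<forall>Z\<in>cObj C. \<forall>t\<in>hom C Z T. t \<in> cFib C"
    using fibration_categoryD(10)[OF C] by blast
  obtain tX tY where tX: "tX \<in> hom C X T" and tY: "tY \<in> hom C Y T"
    using T assms unfolding terminal_def by blast
  have fib: "tX \<in> cFib C" "tY \<in> cFib C" using fibrant tX tY assms by auto
  obtain p1 p2 where pb: "is_pullback C tY tX p1 p2"
    using fibration_categoryD(8)[OF C, rule_format, of tY tX] fib tX tY unfolding hom_def by auto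
  have "p1 \<in> hom C (cDom C p1) X" "p2 \<in> hom C (cDom C p1) Y"
    using pullback_legs_hom[OF pb] tX tY unfolding hom_def by auto
  moreover have "p1 \<in> cFib C" "p2 \<in> cFib C"
    using fibration_categoryD(9)[OF C, rule_format] pb is_pullback_sym[OF pb] fib by blast+
  moreover have "\<exists>u\<in>hom C Q (cDom C p1). cComp C p1 u = a \<and> cComp C p2 u = b"
    if a: "a \<in> hom C Q X" and b: "b \<in> hom C Q Y" for Q a b
  proof -
    \<comment> \<open>both sides are maps into the terminal object\<close>
    have "cComp C tX a = cComp C tY b"
      using T hom_dom_obj[OF cat a] category_comp_hom[OF cat a tX] category_comp_hom[OF cat b tY]
      unfolding terminal_def by blast
    moreover have "a \<in> hom C Q (cDom C tX)" "b \<in> hom C Q (cDom C tY)"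
      using a b tX tY unfolding hom_def by auto
    ultimately show ?thesis by (meson pullback_lift[OF pb])
  qed
  ultimately show thesis by (rule that)
qed

lemma ken_brown_factorization:
  assumes C: "fibration_category C" and w: "w \<in> hom C X Y" "w \<in> cWe C"
  obtains Z j q1 q2 where "j \<in> hom C X Z" "q1 \<in> hom C Z X" "q2 \<in> hom C Z Y"
    "q1 \<in> cFib C \<inter> cWe C" "q2 \<in> cFib C \<inter> cWe C"
    "cComp C q1 j = cId C X" "cComp C q2 j = w"
proof -
  have cat: "category C" by (rule fibration_category_category[OF C])
  have X: "X \<in> cObj C" and Y: "Y \<in> cObj C"
    using hom_dom_obj[OF cat w(1)] hom_cod_obj[OF cat w(1)] .
  obtain P p1 p2 where p1: "p1 \<in> hom C P X" "p1 \<in> cFib C"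
    and p2: "p2 \<in> hom C P Y" "p2 \<in> cFib C"
    and pair: "\<And>Q a b. a \<in> hom C Q X \<Longrightarrow> b \<in> hom C Q Y \<Longrightarrow>
       \<exists>u\<in>hom C Q P. cComp C p1 u = a \<and> cComp C p2 u = b"
    using product_with_fibration_projections[OF C X Y] by metis
  obtain u where u: "u \<in> hom C X P" "cComp C p1 u = cId C X" "cComp C p2 u = w"
    using pair[OF category_id_hom[OF cat X] w(1)] by blast
  obtain Z j q where j: "j \<in> hom C X Z" "j \<in> cWe C" and q: "q \<in> hom C Z P" "q \<in> cFib C"
    and u_eq: "cComp C q j = u"
    using fibration_category_factorization[OF C u(1)] by metis
  define q1 where "q1 = cComp C p1 q"
  define q2 where "q2 = cComp C p2 q"
  have q1: "q1 \<in> hom C Z X" and q2: "q2 \<in> hom C Z Y"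
    unfolding q1_def q2_def using category_comp_hom[OF cat q(1)] p1 p2 by auto
  have "cComp C q1 j = cId C X" "cComp C q2 j = w"
    unfolding q1_def q2_def using category_assoc[OF cat j(1) q(1)] p1 p2 u u_eq by auto
  moreover have "q1 \<in> cFib C" "q2 \<in> cFib C"
    unfolding q1_def q2_def using fib_comp[OF C q(2)] p1 p2 q(1) unfolding hom_def by auto
  moreover have "q1 \<in> cWe C" "q2 \<in> cWe C"
    using we_2_out_of_3_left[OF C j(1) q1] we_2_out_of_3_left[OF C j(1) q2] j(2) w(2)
      id_we[OF C X] calculation(1,2) by auto
  ultimately show thesis using that[OF j(1) q1 q2] by blast
qed

lemma exact_functor_preserves_we:
  assumes C: "fibration_category C" and D: "fibration_category D"
    and F: "exact_functor C D FO FA" and w: "w \<in> cWe C"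
  shows "FA w \<in> cWe D"
proof -
  have catC: "category C" by (rule fibration_category_category[OF C])
  have F_functor: "is_functor C D FO FA"
    and acyclic: "\<forall>p\<in>cFib C \<inter> cWe C. FA p \<in> cFib D \<inter> cWe D"
    using F unfolding exact_functor_def by blast+
  have w_hom: "w \<in> hom C (cDom C w) (cCod C w)" using we_arr[OF C w] unfolding hom_def by blast
  define X where "X = cDom C w"
  have X: "X \<in> cObj C" using hom_dom_obj[OF catC w_hom] unfolding X_def .
  obtain Z j q1 q2 where j: "j \<in> hom C X Z"
    and q1: "q1 \<in> hom C Z X" "q1 \<in> cFib C \<inter> cWe C"
    and q2: "q2 \<in> hom C Z (cCod C w)" "q2 \<in> cFib C \<inter> cWe C"
    and retraction: "cComp C q1 j = cId C X" and w_eq: "cComp C q2 j = w"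
    using ken_brown_factorization[OF C w_hom w] unfolding X_def by metis
  have Fj: "FA j \<in> hom D (FO X) (FO Z)" and Fq1: "FA q1 \<in> hom D (FO Z) (FO X)"
    using functor_hom[OF F_functor] j q1 by auto
  have "cComp D (FA q1) (FA j) = cId D (FO X)"
    using functor_comp[OF F_functor j q1(1)] functor_id[OF F_functor X] retraction by simp
  then have "FA j \<in> cWe D"
    using we_2_out_of_3_right[OF D Fj Fq1] id_we[OF D functor_obj[OF F_functor X]] acyclic q1(2)
    by auto
  moreover have "FA w = cComp D (FA q2) (FA j)"
    using functor_comp[OF F_functor j q2(1)] w_eq by simp
  ultimately show ?thesis
    using we_comp[OF D] acyclic q2 Fj functor_hom[OF F_functor q2(1)] unfolding hom_def by auto
qed

lemma zz_path_map:
  assumes F: "is_functor C D FO FA" and we: "\<forall>w\<in>cWe C. FA w \<in> cWe D"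
    and we_sub_arr: "cWe C \<subseteq> cArr C"
  shows "zz_path C X Y p \<Longrightarrow> zz_path D (FO X) (FO Y) (map (map_sum FA FA) p)"
proof (induction p arbitrary: X)
  case Nil
  then show ?case using functor_obj[OF F] by auto
next
  case (Cons s p)
  show ?case
  proof (cases s)
    case (Inl f)
    then have "f \<in> hom C X (cCod C f)" using Cons.prems unfolding hom_def by auto
    then show ?thesis using Cons Inl functor_hom[OF F] unfolding hom_def by auto
  next
    case (Inr w)
    then have "w \<in> hom C (cDom C w) X" using Cons.prems we_sub_arr unfolding hom_def by auto
    then show ?thesis using Cons Inr functor_hom[OF F] we unfolding hom_def by auto
  qed
qed

lemma zz_rel_map:
  assumes F: "is_functor C D FO FA" and we: "\<forall>w\<in>cWe C. FA w \<in> cWe D"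
    and we_sub_arr: "cWe C \<subseteq> cArr C"
  shows "zz_rel C X Y p q \<Longrightarrow>
    zz_rel D (FO X) (FO Y) (map (map_sum FA FA) p) (map (map_sum FA FA) q)"
proof (induction rule: zz_rel.induct)
  case (zz_comp f g)
  then have "f \<in> hom C (cDom C f) (cCod C f)" "g \<in> hom C (cCod C f) (cCod C g)"
    unfolding hom_def by auto
  moreover note functor_comp[OF F this] functor_hom[OF F this(1)] functor_hom[OF F this(2)]
  ultimately show ?case
    using zz_rel.zz_comp[of "FA f" D "FA g"] unfolding hom_def by auto
next
  case (zz_ident X)
  then show ?case using zz_rel.zz_ident functor_id[OF F] functor_obj[OF F] by fastforce
next
  case (zz_linv w)
  then have "FA w \<in> hom D (FO (cDom C w)) (FO (cCod C w))" "FA w \<in> cWe D"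
    using functor_hom[OF F] we we_sub_arr unfolding hom_def by auto
  then show ?case using zz_rel.zz_linv[of "FA w" D] unfolding hom_def by auto
next
  case (zz_rinv w)
  then have "FA w \<in> hom D (FO (cDom C w)) (FO (cCod C w))" "FA w \<in> cWe D"
    using functor_hom[OF F] we we_sub_arr unfolding hom_def by auto
  then show ?case using zz_rel.zz_rinv[of "FA w" D] unfolding hom_def by auto
next
  case (zz_ctx X Y p q U r V s)
  then show ?case
    using zz_rel.zz_ctx[OF zz_ctx.IH zz_path_map[OF F we we_sub_arr] zz_path_map[OF F we we_sub_arr]]
    by simp
next
  case (zz_refl X Y p)
  then show ?case by (intro zz_rel.zz_refl zz_path_map[OF F we we_sub_arr])
next
  case (zz_sym X Y p q)
  show ?case by (rule zz_rel.zz_sym[OF zz_sym.IH])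
next
  case (zz_trans X Y p q r)
  show ?case by (rule zz_rel.zz_trans[OF zz_trans.IH])
qed

lemma homotopic_map:
  assumes "is_functor C D FO FA" "\<forall>w\<in>cWe C. FA w \<in> cWe D" "cWe C \<subseteq> cArr C"
    and "homotopic C f g"
  shows "homotopic D (FA f) (FA g)"
proof -
  define X Y where "X = cDom C f" and "Y = cCod C f"
  have "f \<in> hom C X Y" "g \<in> hom C X Y" and fg: "zz_rel C X Y [Inl f] [Inl g]"
    using assms(4) unfolding homotopic_def hom_def X_def Y_def by auto
  then have "FA f \<in> hom D (FO X) (FO Y)" "FA g \<in> hom D (FO X) (FO Y)"
    and "zz_rel D (FO X) (FO Y) [Inl (FA f)] [Inl (FA g)]"
    using functor_hom[OF assms(1)] zz_rel_map[OF assms(1-3) fg] by auto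
  then show ?thesis unfolding homotopic_def hom_def by auto
qed

lemma homotopic_comp_left:
  assumes D: "category D" and hom: "homotopic D f g" and h: "h \<in> hom D (cCod D f) Z"
  shows "homotopic D (cComp D h f) (cComp D h g)"
proof -
  define X Y where "X = cDom D f" and "Y = cCod D f"
  have f: "f \<in> hom D X Y" and g: "g \<in> hom D X Y"
    and fg: "zz_rel D X Y [Inl f] [Inl g]"
    using hom unfolding homotopic_def hom_def X_def Y_def by auto
  have hf: "cComp D h f \<in> hom D X Z" and hg: "cComp D h g \<in> hom D X Z"
    using category_comp_hom[OF D _ h] f g unfolding Y_def by auto
  have paths: "zz_path D X X []" "zz_path D Y Z [Inl h]"
    using hom_dom_obj[OF D f] hom_cod_obj[OF D h] h unfolding hom_def Y_def by auto
  have "zz_rel D X Z [Inl f, Inl h] [Inl (cComp D h f)]"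
    "zz_rel D X Z [Inl g, Inl h] [Inl (cComp D h g)]"
    using zz_rel.zz_comp[of f D h] zz_rel.zz_comp[of g D h] f g h unfolding hom_def Y_def by auto
  moreover have "zz_rel D X Z ([] @ [Inl f] @ [Inl h]) ([] @ [Inl g] @ [Inl h])"
    by (rule zz_rel.zz_ctx[OF fg paths])
  ultimately have "zz_rel D X Z [Inl (cComp D h f)] [Inl (cComp D h g)]"
    using zz_rel.zz_sym zz_rel.zz_trans by (metis append_Cons append_Nil)
  then show ?thesis using hf hg unfolding homotopic_def hom_def by auto
qed

lemma adjunction_transpose_inj:
  assumes "adjunction C D FO FA GO GA phi" "A \<in> cObj C" "B \<in> cObj D"
    and "u \<in> hom D (FO A) B" "v \<in> hom D (FO A) B" "phi A B u = phi A B v"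
  shows "u = v"
proof -
  have "inj_on (phi A B) (hom D (FO A) B)"
    using assms(1-3) bij_betw_imp_inj_on unfolding adjunction_def by metis
  from inj_onD[OF this assms(6,4,5)] show ?thesis .
qed

lemma adjunction_counit:
  assumes adj: "adjunction C D FO FA GO GA phi" and C: "category C" and D: "category D"
    and B: "B \<in> cObj D"
  obtains eps where "eps \<in> hom D (FO (GO B)) B"
    and "\<And>A h. h \<in> hom C A (GO B) \<Longrightarrow> phi A B (cComp D eps (FA h)) = h"
proof -
  have F: "is_functor C D FO FA" and G: "is_functor D C GO GA"
    and bij: "\<forall>A\<in>cObj C. \<forall>B\<in>cObj D.
      bij_betw (phi A B) (hom D (FO A) B) (hom C A (GO B))"
    and nat: "\<forall>A A' B B' h k g.
      h \<in> hom C A' A \<and> k \<in> hom D B B' \<and> g \<in> hom D (FO A) B \<longrightarrow>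
        phi A' B' (cComp D k (cComp D g (FA h))) = cComp C (GA k) (cComp C (phi A B g) h)"
    using adj unfolding adjunction_def by blast+
  have GB: "GO B \<in> cObj C" by (rule functor_obj[OF G B])
  have "cId C (GO B) \<in> phi (GO B) B ` hom D (FO (GO B)) B"
    using bij GB B category_id_hom[OF C GB] unfolding bij_betw_def by blast
  then obtain eps where eps: "eps \<in> hom D (FO (GO B)) B" "phi (GO B) B eps = cId C (GO B)"
    by (auto elim!: imageE)
  have "phi A B (cComp D eps (FA h)) = h" if h: "h \<in> hom C A (GO B)" for A h
  proof -
    have "cComp D eps (FA h) \<in> hom D (FO A) B"
      using category_comp_hom[OF D functor_hom[OF F h] eps(1)] .
    then have "phi A B (cComp D eps (FA h)) = phi A B (cComp D (cId D B) (cComp D eps (FA h)))"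
      using category_id_left[OF D] by simp
    also have "\<dots> = cComp C (GA (cId D B)) (cComp C (phi (GO B) B eps) h)"
      using nat h category_id_hom[OF D B] eps(1) by blast
    also have "\<dots> = h"
      using functor_id[OF G B] eps(2) category_id_left[OF C h] by simp
    finally show ?thesis .
  qed
  with eps(1) show thesis by (rule that)
qed

theorem lemma4p4:
  fixes C :: "('o, 'a) fcat" and D :: "('p, 'b) fcat"
    and FO :: "'o \<Rightarrow> 'p" and FA :: "'a \<Rightarrow> 'b"
    and GO :: "'p \<Rightarrow> 'o" and GA :: "'b \<Rightarrow> 'a"
    and phi :: "'o \<Rightarrow> 'p \<Rightarrow> 'b \<Rightarrow> 'a"
  assumes "fibration_category C" and "fibration_category D"
    and "exact_functor C D FO FA" and "exact_functor D C GO GA"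
    and "adjunction C D FO FA GO GA phi"
    and "A \<in> cObj C" and "B \<in> cObj D"
    and "f \<in> hom C A (GO B)" and "g \<in> hom C A (GO B)"
    and "homotopic C f g"
    and "fbar \<in> hom D (FO A) B" and "phi A B fbar = f"
    and "gbar \<in> hom D (FO A) B" and "phi A B gbar = g"
  shows "homotopic D fbar gbar"
proof -
  have C: "category C" using assms(1) by (rule fibration_category_category)
  have D: "category D" using assms(2) by (rule fibration_category_category)
  have F: "is_functor C D FO FA"
    using assms(3) unfolding exact_functor_def by blast
  obtain eps where eps: "eps \<in> hom D (FO (GO B)) B"
    and transpose: "\<And>A h. h \<in> hom C A (GO B) \<Longrightarrow> phi A B (cComp D eps (FA h)) = h"
    using adjunction_counit[OF assms(5) C D assms(7)] by blast
  have "fbar = cComp D eps (FA f)" "gbar = cComp D eps (FA g)"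
    using adjunction_transpose_inj[OF assms(5-7)] category_comp_hom[OF D functor_hom[OF F] eps]
      transpose assms(8,9,11-14) by metis+
  moreover have "homotopic D (FA f) (FA g)"
    using homotopic_map[OF F _ _ assms(10)] exact_functor_preserves_we[OF assms(1-3)]
      fibration_categoryD(3)[OF assms(1)] by blast
  moreover have "eps \<in> hom D (cCod D (FA f)) B"
    using eps functor_hom[OF F assms(8)] unfolding hom_def by auto
  ultimately show ?thesis by (simp add: homotopic_comp_left[OF D])
qed

end
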